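(* Let $u_0\in L^2([0,1])$ have weak derivative $\partial_x u_0\in L^2([0,1])$ and satisfy $u_0(0)=u_0(1)=0$. If $v_0=H(u_0)$, then $$\Vert\partial^2_{xx}v_0\Vert_{L^2}\le\tfrac12 e^{\Vert u_0\Vert_{L^2}}\Vert\partial_x u_0\Vert_{L^2}\Bigl(1+\frac{\Vert u_0\Vert_{L^2}}{2}\Bigr).$$
   Context: $H(u)(x)=\dfrac{e^{-\frac12\int_0^x u(s)ds}}{\int_0^1 e^{-\frac12\int_0^y u(s)ds}\,dy}$ for $u\in L^2([0,1])$, $x\in[0,1]$ (Cole–Hopf transform). *)

theory Defs
  imports "HOL-Analysis.Analysis"
begin

definition L2_01 :: "(real \<Rightarrow> real) \<Rightarrow> bool" where
  "L2_01 f \<longleftrightarrow> set_borel_measurable lborel {0..1} f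
      \<and> set_integrable lborel {0..1} (\<lambda>x. (f x)^2)"

definition L2norm_01 :: "(real \<Rightarrow> real) \<Rightarrow> real" where
  "L2norm_01 f = sqrt (LINT x:{0..1}|lborel. (f x)^2)"

definition test_fun_01 :: "(real \<Rightarrow> real) \<Rightarrow> bool" where
  "test_fun_01 \<phi> \<longleftrightarrow> (\<forall>k x. ((deriv ^^ k) \<phi>) field_differentiable (at x))
      \<and> (\<exists>a b. 0 < a \<and> a \<le> b \<and> b < 1 \<and> (\<forall>x. x \<notin> {a..b} \<longrightarrow> \<phi> x = 0))"

definition weak_deriv_01 :: "(real \<Rightarrow> real) \<Rightarrow> (real \<Rightarrow> real) \<Rightarrow> bool" where
  "weak_deriv_01 u du \<longleftrightarrow> (\<forall>\<phi>. test_fun_01 \<phi> \<longrightarrow>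
      (LINT x:{0..1}|lborel. u x * deriv \<phi> x) = - (LINT x:{0..1}|lborel. du x * \<phi> x))"

definition weak_deriv2_01 :: "(real \<Rightarrow> real) \<Rightarrow> (real \<Rightarrow> real) \<Rightarrow> bool" where
  "weak_deriv2_01 v w \<longleftrightarrow> (\<forall>\<phi>. test_fun_01 \<phi> \<longrightarrow>
      (LINT x:{0..1}|lborel. v x * deriv (deriv \<phi>) x) = (LINT x:{0..1}|lborel. w x * \<phi> x))"

definition ColeHopf :: "(real \<Rightarrow> real) \<Rightarrow> real \<Rightarrow> real" where
  "ColeHopf u x = exp (- (1/2) * (LINT s:{0..x}|lborel. u s))
      / (LINT y:{0..1}|lborel. exp (- (1/2) * (LINT s:{0..y}|lborel. u s)))"

end

(* Since u0 is continuous with u0(0) = 0 and has the weak derivative du0, the du Bois-Reymond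
   lemma (tested against smoothed indicators of intervals) gives u0(x) = \<integral>_0^x du0, hence
   |u0| <= ||du0||. The Cole-Hopf transform v = H(u0) is C^1 with v' = -u0 v / 2, and two
   integrations by parts against a test function identify its weak second derivative as
   w = v (u0^2/4 - du0/2). Since |\<integral>_0^x u0| <= ||u0||, the numerator of H(u0) is at most
   e^(||u0||/2) and its denominator at least e^(-||u0||/2), so 0 < v <= e^||u0||. Hence
   |w| <= e^||u0|| (||du0|| |u0| / 4 + |du0| / 2) pointwise, and Minkowski's inequality gives
   ||w|| <= e^||u0|| (||du0|| ||u0|| / 4 + ||du0|| / 2). *)

theory Submission
  imports Defs "HOL-Computational_Algebra.Polynomial"
begin

section \<open>Smooth functions\<close>

definition smooth :: "(real \<Rightarrow> real) \<Rightarrow> bool" where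
  "smooth f \<longleftrightarrow> (\<forall>k x. ((deriv ^^ k) f) field_differentiable (at x))"

lemma smooth_coinduct:
  assumes "P f" and step: "\<And>g. P g \<Longrightarrow> (\<forall>x. g field_differentiable (at x)) \<and> P (deriv g)"
  shows "smooth f"
proof -
  have "P ((deriv ^^ k) f)" for k
    by (induct k) (auto simp: assms(1) dest: step)
  then show ?thesis unfolding smooth_def using step by blast
qed

lemma smooth_DERIV: "smooth f \<Longrightarrow> DERIV f x :> deriv f x"
  unfolding smooth_def by (metis DERIV_deriv_iff_field_differentiable funpow_0)

lemma smooth_isCont: "smooth f \<Longrightarrow> isCont f x"
  using smooth_DERIV DERIV_isCont by blast

lemma smooth_deriv: "smooth f \<Longrightarrow> smooth (deriv f)"
  unfolding smooth_def by (metis funpow_Suc_right o_apply)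

lemma smooth_funpow_deriv: "smooth f \<Longrightarrow> smooth ((deriv ^^ k) f)"
  by (induct k) (auto intro: smooth_deriv)

text \<open>Finite sums of products of smooth functions are closed under differentiation by the
  Leibniz rule; this invariant shows by coinduction that products of smooth functions are smooth.\<close>

inductive sum_of_smooth_products :: "(real \<Rightarrow> real) \<Rightarrow> bool" where
  product: "smooth f \<Longrightarrow> smooth g \<Longrightarrow> sum_of_smooth_products (\<lambda>x. f x * g x)"
| sum: "sum_of_smooth_products f \<Longrightarrow> sum_of_smooth_products g \<Longrightarrow>
    sum_of_smooth_products (\<lambda>x. f x + g x)"

lemma sum_of_smooth_products_deriv:
  "sum_of_smooth_products h \<Longrightarrow>
     (\<forall>x. DERIV h x :> deriv h x) \<and> sum_of_smooth_products (deriv h)"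
proof (induct rule: sum_of_smooth_products.induct)
  case (product f g)
  have D: "DERIV (\<lambda>x. f x * g x) x :> deriv f x * g x + f x * deriv g x" for x
    using product by (auto intro!: derivative_eq_intros smooth_DERIV)
  then have "deriv (\<lambda>x. f x * g x) = (\<lambda>x. deriv f x * g x + f x * deriv g x)"
    by (auto intro: DERIV_imp_deriv)
  with D product show ?case
    by (auto intro!: sum_of_smooth_products.intros smooth_deriv)
next
  case (sum f g)
  then have D: "DERIV (\<lambda>x. f x + g x) x :> deriv f x + deriv g x" for x
    by (auto intro!: derivative_eq_intros)
  then have "deriv (\<lambda>x. f x + g x) = (\<lambda>x. deriv f x + deriv g x)"
    by (auto intro: DERIV_imp_deriv)
  with D sum show ?case
    by (auto intro: sum_of_smooth_products.sum)
qed

lemma sum_of_smooth_products_smooth: "sum_of_smooth_products h \<Longrightarrow> smooth h"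
  by (rule smooth_coinduct[of sum_of_smooth_products])
     (auto dest: sum_of_smooth_products_deriv simp: field_differentiable_def)

lemma smooth_const: "smooth (\<lambda>x. c)"
  by (rule smooth_coinduct[of "\<lambda>h. \<exists>c. h = (\<lambda>x. c)"]) auto

lemma smooth_mult: "smooth f \<Longrightarrow> smooth g \<Longrightarrow> smooth (\<lambda>x. f x * g x)"
  by (rule sum_of_smooth_products_smooth[OF sum_of_smooth_products.product])

lemma smooth_add:
  assumes "smooth f" "smooth g"
  shows "smooth (\<lambda>x. f x + g x)"
proof -
  have "sum_of_smooth_products (\<lambda>x. f x * 1 + g x * 1)"
    using assms smooth_const by (intro sum_of_smooth_products.intros)
  then show ?thesis by (simp add: sum_of_smooth_products_smooth)
qed

lemma smooth_diff: "smooth f \<Longrightarrow> smooth g \<Longrightarrow> smooth (\<lambda>x. f x - g x)"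
  using smooth_add[of f "\<lambda>x. (-1) * g x"] smooth_mult[OF smooth_const, of g "-1"] by simp

lemma smooth_affine:
  assumes "smooth f"
  shows "smooth (\<lambda>x. f (c * x + d))"
proof (rule smooth_coinduct[of "\<lambda>h. \<exists>k e. h = (\<lambda>x. e * (deriv ^^ k) f (c * x + d))"])
  show "\<exists>k e. (\<lambda>x. f (c * x + d)) = (\<lambda>x. e * (deriv ^^ k) f (c * x + d))"
    by (rule exI[of _ 0], rule exI[of _ 1]) simp
next
  fix g assume "\<exists>k e. g = (\<lambda>x. e * (deriv ^^ k) f (c * x + d))"
  then obtain k e where g: "g = (\<lambda>x. e * (deriv ^^ k) f (c * x + d))" by blast
  have D: "DERIV g x :> (e * c) * (deriv ^^ Suc k) f (c * x + d)" for x
    unfolding g using smooth_DERIV[OF smooth_funpow_deriv[OF assms], of k "c * x + d"]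
    by (auto intro!: derivative_eq_intros DERIV_chain2[where f="(deriv ^^ k) f"])
  then have "deriv g = (\<lambda>x. (e * c) * (deriv ^^ Suc k) f (c * x + d))"
    by (auto intro: DERIV_imp_deriv)
  with D show "(\<forall>x. g field_differentiable at x) \<and>
      (\<exists>k e. deriv g = (\<lambda>x. e * (deriv ^^ k) f (c * x + d)))"
    by (auto simp: field_differentiable_def intro!: exI[of _ "Suc k"])
qed

section \<open>Bump functions and test functions\<close>

text \<open>The flat function \<open>exp (-1/t)\<close>: all its derivatives are of the form
  \<open>p (1/t) exp (-1/t)\<close> for polynomials \<open>p\<close> and vanish to infinite order at \<open>0\<close>.\<close>

definition poly_exp_recip :: "real poly \<Rightarrow> real \<Rightarrow> real" where
  "poly_exp_recip p t = (if t > 0 then poly p (1/t) * exp (-(1/t)) else 0)"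

lemma poly_times_exp_minus_tendsto_0:
  fixes p :: "real poly"
  shows "((\<lambda>x. poly p x * exp (-x)) \<longlongrightarrow> 0) at_top"
proof -
  have "((\<lambda>x. \<Sum>i\<le>degree p. coeff p i * (x ^ i / exp x)) \<longlongrightarrow> (\<Sum>i\<le>degree p. coeff p i * 0)) at_top"
    by (intro tendsto_sum tendsto_mult_left tendsto_power_div_exp_0)
  moreover have "poly p x * exp (-x) = (\<Sum>i\<le>degree p. coeff p i * (x ^ i / exp x))" for x
    by (simp add: poly_altdef exp_minus divide_inverse sum_distrib_right mult.assoc)
  ultimately show ?thesis by simp
qed

lemma poly_exp_recip_tendsto_0:
  fixes p :: "real poly"
  shows "((\<lambda>t. poly p (1/t) * exp (-(1/t))) \<longlongrightarrow> 0) (at_right 0)"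
  using poly_times_exp_minus_tendsto_0[of p]
  by (subst filterlim_at_right_to_top) (simp add: inverse_eq_divide)

definition poly_exp_recip_step :: "real poly \<Rightarrow> real poly" where
  "poly_exp_recip_step p = pCons 0 (pCons 0 (p - pderiv p))"

lemma poly_exp_recip_DERIV_pos:
  assumes "t > 0"
  shows "DERIV (poly_exp_recip p) t :> poly_exp_recip (poly_exp_recip_step p) t"
proof -
  have "DERIV (\<lambda>t. poly p (1/t) * exp (-(1/t))) t :>
     poly (pderiv p) (1/t) * (- 1 / t^2) * exp (-(1/t)) + poly p (1/t) * (exp (-(1/t)) * (1/t^2))"
    using assms by (auto intro!: derivative_eq_intros simp: power2_eq_square field_simps)
  moreover have "poly (pderiv p) (1/t) * (- 1 / t^2) * exp (-(1/t))
      + poly p (1/t) * (exp (-(1/t)) * (1/t^2)) = poly_exp_recip (poly_exp_recip_step p) t"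
    using assms
    by (simp add: poly_exp_recip_def poly_exp_recip_step_def power2_eq_square field_simps)
  ultimately have "DERIV (\<lambda>t. poly p (1/t) * exp (-(1/t))) t :>
      poly_exp_recip (poly_exp_recip_step p) t"
    by simp
  then show ?thesis
    by (rule has_field_derivative_transform_within_open[where S="{0<..}"])
       (use assms in \<open>auto simp: poly_exp_recip_def\<close>)
qed

lemma poly_exp_recip_DERIV_0: "DERIV (poly_exp_recip p) 0 :> 0"
proof -
  have "((\<lambda>h. poly (pCons 0 p) (1/h) * exp (-(1/h))) \<longlongrightarrow> 0) (at_right 0)"
    by (rule poly_exp_recip_tendsto_0)
  then have right: "((\<lambda>h. poly_exp_recip p h / h) \<longlongrightarrow> 0) (at_right 0)"
    by (rule Lim_transform_eventually)
       (auto simp: poly_exp_recip_def eventually_at_filter)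
  have "\<forall>\<^sub>F h in at_left 0. poly_exp_recip p h / h = 0"
    by (auto simp: poly_exp_recip_def eventually_at_filter)
  then have left: "((\<lambda>h. poly_exp_recip p h / h) \<longlongrightarrow> 0) (at_left 0)"
    by (rule tendsto_eventually)
  from left right show ?thesis
    by (simp add: DERIV_def poly_exp_recip_def filterlim_split_at)
qed

lemma poly_exp_recip_DERIV:
  "DERIV (poly_exp_recip p) t :> poly_exp_recip (poly_exp_recip_step p) t"
proof (cases t "0::real" rule: linorder_cases)
  case less
  have "DERIV (\<lambda>t. 0) t :> poly_exp_recip (poly_exp_recip_step p) t"
    using less by (simp add: poly_exp_recip_def)
  then show ?thesis
    by (rule has_field_derivative_transform_within_open[where S="{..<0}"])
       (use less in \<open>auto simp: poly_exp_recip_def\<close>)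
next
  case equal
  then show ?thesis using poly_exp_recip_DERIV_0 by (simp add: poly_exp_recip_def)
qed (rule poly_exp_recip_DERIV_pos)

lemma smooth_poly_exp_recip: "smooth (poly_exp_recip p)"
proof (rule smooth_coinduct[of "\<lambda>h. \<exists>p. h = poly_exp_recip p"])
  fix g :: "real \<Rightarrow> real" assume "\<exists>p. g = poly_exp_recip p"
  then obtain p where g: "g = poly_exp_recip p" by blast
  have "deriv g = poly_exp_recip (poly_exp_recip_step p)"
    unfolding g by (auto intro: DERIV_imp_deriv poly_exp_recip_DERIV)
  then show "(\<forall>x. g field_differentiable at x) \<and> (\<exists>p. deriv g = poly_exp_recip p)"
    unfolding g using poly_exp_recip_DERIV by (auto simp: field_differentiable_def)
qed auto

definition bump :: "real \<Rightarrow> real \<Rightarrow> real" where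
  "bump e t = poly_exp_recip 1 (e + t) * poly_exp_recip 1 (e - t)"

lemma smooth_bump: "smooth (bump e)"
  unfolding bump_def using smooth_mult[OF smooth_affine[OF smooth_poly_exp_recip, of 1 1 e]
                       smooth_affine[OF smooth_poly_exp_recip, of 1 "-1" e]]
  by (simp add: add.commute)

lemma bump_nonneg: "bump e t \<ge> 0"
  by (simp add: bump_def poly_exp_recip_def)

lemma bump_eq_0: "\<bar>t\<bar> \<ge> e \<Longrightarrow> bump e t = 0"
  by (auto simp: bump_def poly_exp_recip_def)

lemma bump_pos: "\<bar>t\<bar> < e \<Longrightarrow> bump e t > 0"
  by (auto simp: bump_def poly_exp_recip_def)

lemma isCont_bump: "isCont (bump e) x"
  by (rule smooth_isCont[OF smooth_bump])

lemma integral_eq_0_below: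
  fixes f :: "real \<Rightarrow> real"
  assumes "\<And>x. x \<le> c \<Longrightarrow> f x = 0" "t \<le> c"
  shows "integral {a..t} f = 0"
proof -
  have "integral {a..t} f = integral {a..t} (\<lambda>_. 0::real)"
    by (rule integral_cong) (use assms in auto)
  then show ?thesis by simp
qed

lemma DERIV_integral_vanishing_below:
  fixes f :: "real \<Rightarrow> real"
  assumes cont: "\<And>x. isCont f x" and "a < c" and zero: "\<And>x. x \<le> c \<Longrightarrow> f x = 0"
  shows "DERIV (\<lambda>t. integral {a..t} f) t :> f t"
proof (cases "t < c")
  case True
  have below: "integral {a..s} f = 0" if "s < c" for s
    by (rule integral_eq_0_below[where c=c]) (use that zero in auto)
  have "DERIV (\<lambda>t. 0) t :> f t" using True zero by simp
  then show ?thesis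
    by (rule has_field_derivative_transform_within_open[where S="{..<c}"])
       (use True below in auto)
next
  case False
  then have t: "a < t" using \<open>a < c\<close> by simp
  have "continuous_on {a..t+1} f"
    by (intro continuous_at_imp_continuous_on) (use cont in auto)
  from integral_has_real_derivative[OF this, of t] t
  have "((\<lambda>x. integral {a..x} f) has_real_derivative f t) (at t within {a..t+1})" by simp
  moreover have "at t within {a..t+1} = at t"
    by (rule at_within_interior) (use t in simp)
  ultimately show ?thesis by simp
qed

definition smooth_step :: "real \<Rightarrow> real \<Rightarrow> real" where
  "smooth_step e t = integral {-1..t} (bump e)"

lemma smooth_step_DERIV: "0 < e \<Longrightarrow> e < 1 \<Longrightarrow> DERIV (smooth_step e) t :> bump e t"
  unfolding smooth_step_def
  by (rule DERIV_integral_vanishing_below[where c="-e"]) (auto intro: isCont_bump bump_eq_0)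

lemma smooth_step_eq_0: "0 < e \<Longrightarrow> t \<le> -e \<Longrightarrow> smooth_step e t = 0"
  unfolding smooth_step_def by (rule integral_eq_0_below[where c="-e"]) (auto intro: bump_eq_0)

lemma smooth_step_eq_top:
  assumes "0 < e" "e < 1" "e \<le> t"
  shows "smooth_step e t = smooth_step e e"
proof (cases "e < t")
  case True
  from MVT2[OF True, of "smooth_step e" "bump e"] smooth_step_DERIV[OF assms(1,2)]
  obtain z where "e < z" "smooth_step e t - smooth_step e e = (t - e) * bump e z" by blast
  then show ?thesis using bump_eq_0[of e z] by simp
qed (use assms in simp)

lemma smooth_step_top_pos:
  assumes "0 < e" "e < 1"
  shows "smooth_step e e > 0"
proof -
  have "-e < e" using assms by simp
  from MVT2[OF this, of "smooth_step e" "bump e"] smooth_step_DERIV[OF assms]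
  obtain z where "-e < z" "z < e"
    "smooth_step e e - smooth_step e (-e) = (e - -e) * bump e z" by blast
  then show ?thesis using bump_pos[of z e] smooth_step_eq_0[OF assms(1), of "-e"] assms by simp
qed

lemma smooth_smooth_step:
  assumes "0 < e" "e < 1"
  shows "smooth (smooth_step e)"
proof -
  have "deriv (smooth_step e) = bump e"
    using smooth_step_DERIV[OF assms] by (auto intro: DERIV_imp_deriv)
  then have higher: "(deriv ^^ Suc k) (smooth_step e) = (deriv ^^ k) (bump e)" for k
    by (simp add: funpow_Suc_right del: funpow.simps)
  show ?thesis
    unfolding smooth_def
  proof (intro allI)
    fix k x
    show "(deriv ^^ k) (smooth_step e) field_differentiable at x"
    proof (cases k)
      case 0
      then show ?thesis
        using smooth_step_DERIV[OF assms] by (auto simp: field_differentiable_def)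
    next
      case (Suc j)
      then show ?thesis
        using higher[of j] smooth_bump unfolding smooth_def by simp
    qed
  qed
qed

lemma test_fun_01_iff:
  "test_fun_01 \<phi> \<longleftrightarrow>
     smooth \<phi> \<and> (\<exists>a b. 0 < a \<and> a \<le> b \<and> b < 1 \<and> (\<forall>x. x \<notin> {a..b} \<longrightarrow> \<phi> x = 0))"
  by (simp add: test_fun_01_def smooth_def)

text \<open>Up to the factor \<open>smooth_step e e\<close>, a smoothing of the indicator function of \<open>[x, y]\<close>.\<close>

definition plateau :: "real \<Rightarrow> real \<Rightarrow> real \<Rightarrow> real \<Rightarrow> real" where
  "plateau e x y t = smooth_step e (t - x) - smooth_step e (t - y)"

lemma test_fun_01_plateau:
  assumes "0 < e" "e < x" "x \<le> y" "y + e < 1"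
  shows "test_fun_01 (plateau e x y)"
proof -
  have e1: "e < 1" using assms by simp
  have "smooth (plateau e x y)"
    unfolding plateau_def
    using smooth_diff[OF smooth_affine[OF smooth_smooth_step[OF assms(1) e1], of 1 "-x"]
                         smooth_affine[OF smooth_smooth_step[OF assms(1) e1], of 1 "-y"]]
    by simp
  moreover have "plateau e x y t = 0" if "t \<notin> {x-e..y+e}" for t
  proof -
    from that consider "t < x - e" | "t > y + e" by fastforce
    then show ?thesis
    proof cases
      case 1
      then show ?thesis
        using smooth_step_eq_0[OF assms(1), of "t-x"] smooth_step_eq_0[OF assms(1), of "t-y"] assms
        by (simp add: plateau_def)
    next
      case 2
      then show ?thesis
        using smooth_step_eq_top[OF assms(1) e1, of "t-x"] smooth_step_eq_top[OF assms(1) e1, of "t-y"]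
          assms
        by (simp add: plateau_def)
    qed
  qed
  ultimately show ?thesis
    unfolding test_fun_01_iff using assms by (intro conjI exI[of _ "x-e"] exI[of _ "y+e"]) auto
qed

lemma deriv_plateau:
  "0 < e \<Longrightarrow> e < 1 \<Longrightarrow> deriv (plateau e x y) t = bump e (t - x) - bump e (t - y)"
  unfolding plateau_def
  by (rule DERIV_imp_deriv) (auto intro!: derivative_eq_intros DERIV_chain2[OF smooth_step_DERIV])

section \<open>The du Bois-Reymond lemma\<close>

lemma set_integral_abs_bound:
  fixes f g :: "_ \<Rightarrow> real"
  assumes "set_integrable M A f" "set_integrable M A g" "\<And>x. x \<in> A \<Longrightarrow> \<bar>f x\<bar> \<le> g x"
  shows "\<bar>LINT x:A|M. f x\<bar> \<le> (LINT x:A|M. g x)"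
proof -
  have bounds: "f x \<le> g x" "- g x \<le> f x" if "x \<in> A" for x
    using assms(3)[OF that] by (simp_all add: abs_le_iff)
  have "set_integrable M A (\<lambda>x. - g x)"
    using set_integrable_mult_right[of "-1" M A g] assms(2) by simp
  then have "(LINT x:A|M. - g x) \<le> (LINT x:A|M. f x)"
    using assms(1) bounds(2) by (rule set_integral_mono)
  moreover have "(LINT x:A|M. f x) \<le> (LINT x:A|M. g x)"
    using assms(1,2) bounds(1) by (rule set_integral_mono)
  ultimately show ?thesis
    using set_integral_uminus[OF assms(2)] by (simp add: abs_le_iff)
qed

lemma continuous_on_bump_shift: "continuous_on S (\<lambda>t. bump e (t - z))"
  by (intro continuous_at_imp_continuous_on ballI isCont_o2[OF _ isCont_bump] continuous_intros)

lemma integral_bump_shift: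
  assumes "0 < e" "e < 1" "e \<le> z" "z + e \<le> 1"
  shows "(LINT t:{0..1}|lborel. bump e (t - z)) = smooth_step e e"
proof -
  have "DERIV (\<lambda>t. smooth_step e (t - z)) t :> bump e (t - z)" for t
    using DERIV_chain2[OF smooth_step_DERIV[OF assms(1,2)] DERIV_diff[OF DERIV_ident DERIV_const]]
    by simp
  then have "(\<integral>t. bump e (t - z) * indicator {0..1} t \<partial>lborel)
      = smooth_step e (1 - z) - smooth_step e (0 - z)"
    by (intro integral_FTC_Icc_real) (auto intro!: isCont_o2[OF _ isCont_bump] continuous_intros)
  also have "\<dots> = smooth_step e e"
    using smooth_step_eq_top[OF assms(1,2), of "1 - z"] smooth_step_eq_0[OF assms(1), of "0 - z"] assms
    by simp
  finally show ?thesis by (simp add: set_lebesgue_integral_def mult.commute)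
qed

lemma bump_average_approx:
  fixes h :: "real \<Rightarrow> real"
  assumes h: "continuous_on {0..1} h"
    and e: "0 < e" "e < 1" "e \<le> z" "z + e \<le> 1"
    and osc: "\<And>t. t \<in> {0..1} \<Longrightarrow> \<bar>t - z\<bar> < e \<Longrightarrow> \<bar>h t - h z\<bar> \<le> \<delta>"
  shows "\<bar>(LINT t:{0..1}|lborel. h t * bump e (t - z)) - h z * smooth_step e e\<bar>
    \<le> \<delta> * smooth_step e e"
proof -
  have int_b: "set_integrable lborel {0..1} (\<lambda>t. bump e (t - z))"
    by (intro borel_integrable_atLeastAtMost' continuous_on_bump_shift)
  have int_hb: "set_integrable lborel {0..1} (\<lambda>t. h t * bump e (t - z))"
    by (intro borel_integrable_atLeastAtMost' continuous_on_mult h continuous_on_bump_shift)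
  have "(LINT t:{0..1}|lborel. h t * bump e (t - z)) - h z * smooth_step e e
      = (LINT t:{0..1}|lborel. (h t - h z) * bump e (t - z))"
    using int_hb int_b integral_bump_shift[OF e] by (simp add: left_diff_distrib)
  also have "\<bar>\<dots>\<bar> \<le> (LINT t:{0..1}|lborel. \<delta> * bump e (t - z))"
  proof (rule set_integral_abs_bound)
    show "set_integrable lborel {0..1} (\<lambda>t. (h t - h z) * bump e (t - z))"
      using int_hb int_b by (simp add: left_diff_distrib)
    show "\<bar>(h t - h z) * bump e (t - z)\<bar> \<le> \<delta> * bump e (t - z)" if "t \<in> {0..1}" for t
      using osc[OF that] bump_eq_0[of e "t - z"] bump_nonneg[of e "t - z"]
      by (cases "\<bar>t - z\<bar> < e") (auto simp: abs_mult intro: mult_right_mono)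
  qed (use int_b in simp)
  also have "\<dots> = \<delta> * smooth_step e e"
    using integral_bump_shift[OF e] by simp
  finally show ?thesis .
qed

text \<open>du Bois-Reymond lemma: testing \<open>h\<close> against \<open>plateau e x y\<close>, whose derivative is
  \<open>bump e (t - x) - bump e (t - y)\<close>, compares the averages of \<open>h\<close> near \<open>x\<close> and near \<open>y\<close>.\<close>

lemma du_Bois_Reymond_01_interior:
  fixes h :: "real \<Rightarrow> real"
  assumes h: "continuous_on {0..1} h"
    and weak: "\<And>\<phi>. test_fun_01 \<phi> \<Longrightarrow> (LINT t:{0..1}|lborel. h t * deriv \<phi> t) = 0"
    and xy: "0 < x" "x < y" "y < 1"
  shows "h x = h y"
proof (rule ccontr)
  assume ne: "h x \<noteq> h y"
  define \<delta> where "\<delta> = \<bar>h x - h y\<bar> / 3"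
  have \<delta>: "\<delta> > 0" using ne by (simp add: \<delta>_def)
  have x01: "x \<in> {0..1}" "y \<in> {0..1}" using xy by auto
  obtain dx where dx: "dx > 0" "\<And>t. t \<in> {0..1} \<Longrightarrow> dist t x < dx \<Longrightarrow> dist (h t) (h x) < \<delta>"
    using h x01(1) \<delta> unfolding continuous_on_iff by metis
  obtain dy where dy: "dy > 0" "\<And>t. t \<in> {0..1} \<Longrightarrow> dist t y < dy \<Longrightarrow> dist (h t) (h y) < \<delta>"
    using h x01(2) \<delta> unfolding continuous_on_iff by metis
  define e where "e = min (min dx dy) (min x (1 - y)) / 2"
  have e: "0 < e" "e < x" "y + e < 1" "e < dx" "e < dy" "e < 1"
    using dx dy xy by (auto simp: e_def min_def field_simps)
  have avg_x: "\<bar>(LINT t:{0..1}|lborel. h t * bump e (t - x)) - h x * smooth_step e e\<bar>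
      \<le> \<delta> * smooth_step e e"
    by (rule bump_average_approx[OF h])
       (use e xy dx in \<open>auto simp: dist_real_def intro: less_imp_le\<close>)
  have avg_y: "\<bar>(LINT t:{0..1}|lborel. h t * bump e (t - y)) - h y * smooth_step e e\<bar>
      \<le> \<delta> * smooth_step e e"
    by (rule bump_average_approx[OF h])
       (use e xy dy in \<open>auto simp: dist_real_def intro: less_imp_le\<close>)
  have "(LINT t:{0..1}|lborel. h t * deriv (plateau e x y) t) = 0"
    using e xy by (intro weak test_fun_01_plateau) auto
  moreover have "set_integrable lborel {0..1} (\<lambda>t. h t * bump e (t - z))" for z
    by (intro borel_integrable_atLeastAtMost' continuous_on_mult h continuous_on_bump_shift)
  ultimately have "(LINT t:{0..1}|lborel. h t * bump e (t - x))
      = (LINT t:{0..1}|lborel. h t * bump e (t - y))"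
    by (simp add: deriv_plateau[OF e(1) e(6)] right_diff_distrib)
  with avg_x avg_y have "\<bar>h x * smooth_step e e - h y * smooth_step e e\<bar>
      \<le> 2 * \<delta> * smooth_step e e"
    unfolding abs_le_iff by linarith
  then have "\<bar>h x - h y\<bar> * smooth_step e e \<le> 2 * \<delta> * smooth_step e e"
    using smooth_step_top_pos[OF e(1) e(6)] by (simp add: abs_mult flip: left_diff_distrib)
  with smooth_step_top_pos[OF e(1) e(6)] have "\<bar>h x - h y\<bar> \<le> 2 * \<delta>"
    by simp
  moreover have "\<bar>h x - h y\<bar> = 3 * \<delta>" by (simp add: \<delta>_def)
  ultimately show False using \<delta> by linarith
qed

lemma du_Bois_Reymond_01:
  fixes h :: "real \<Rightarrow> real"
  assumes h: "continuous_on {0..1} h"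
    and weak: "\<And>\<phi>. test_fun_01 \<phi> \<Longrightarrow> (LINT t:{0..1}|lborel. h t * deriv \<phi> t) = 0"
    and x: "x \<in> {0..1}"
  shows "h x = h 0"
proof -
  have interior: "h y = h (1/2)" if "y \<in> {0<..<1}" for y
  proof (cases y "1/2::real" rule: linorder_cases)
    case less
    with that show ?thesis by (intro du_Bois_Reymond_01_interior[OF h weak]) auto
  next
    case greater
    with that show ?thesis by (intro du_Bois_Reymond_01_interior[OF h weak, symmetric]) auto
  qed (simp only:)
  have "h y = h (1/2)" if "y \<in> {0..1}" for y
  proof (rule continuous_constant_on_closure[where S="{0<..<1}" and f=h])
    show "continuous_on (closure {0<..<1}) h" using h by simp
    show "y \<in> closure {0<..<1}" using that by simp
  qed (rule interior)
  from this[OF x] this[of 0] show ?thesis by simp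
qed

section \<open>Square-integrable functions on \<open>[0, 1]\<close>\<close>

lemma set_integral_nonneg:
  fixes f :: "_ \<Rightarrow> real"
  assumes "\<And>x. x \<in> A \<Longrightarrow> 0 \<le> f x"
  shows "0 \<le> (LINT x:A|M. f x)"
  unfolding set_lebesgue_integral_def
  by (rule Bochner_Integration.integral_nonneg) (use assms in \<open>auto simp: indicator_def\<close>)

lemma set_borel_measurable_mult:
  fixes f g :: "_ \<Rightarrow> real"
  assumes "set_borel_measurable M A f" "set_borel_measurable M A g"
  shows "set_borel_measurable M A (\<lambda>x. f x * g x)"
proof -
  have "(\<lambda>x. indicator A x *\<^sub>R (f x * g x)) = (\<lambda>x. (indicator A x *\<^sub>R f x) * (indicator A x *\<^sub>R g x))"
    by (auto simp: indicator_def)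
  then show ?thesis
    using assms unfolding set_borel_measurable_def by (simp add: borel_measurable_times)
qed

lemma set_borel_measurable_add:
  fixes f g :: "_ \<Rightarrow> real"
  assumes "set_borel_measurable M A f" "set_borel_measurable M A g"
  shows "set_borel_measurable M A (\<lambda>x. f x + g x)"
  using assms unfolding set_borel_measurable_def by (simp add: distrib_left borel_measurable_add)

lemma set_borel_measurable_cmult:
  fixes f :: "_ \<Rightarrow> real"
  shows "set_borel_measurable M A f \<Longrightarrow> set_borel_measurable M A (\<lambda>x. c * f x)"
  unfolding set_borel_measurable_def by (simp add: mult.left_commute[of _ c])

lemma set_borel_measurable_abs:
  fixes f :: "_ \<Rightarrow> real"
  assumes "set_borel_measurable M A f"
  shows "set_borel_measurable M A (\<lambda>x. \<bar>f x\<bar>)"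
proof -
  have "(\<lambda>x. indicator A x *\<^sub>R \<bar>f x\<bar>) = (\<lambda>x. \<bar>indicator A x *\<^sub>R f x\<bar>)"
    by (auto simp: indicator_def)
  then show ?thesis
    using assms unfolding set_borel_measurable_def by (simp add: borel_measurable_abs)
qed

lemma continuous_on_imp_set_borel_measurable:
  fixes f :: "real \<Rightarrow> real"
  shows "continuous_on {a..b} f \<Longrightarrow> set_borel_measurable lborel {a..b} f"
  using borel_integrable_atLeastAtMost'[of a b f]
  unfolding set_integrable_def set_borel_measurable_def by auto

lemma L2norm_01_squared: "(L2norm_01 f)\<^sup>2 = (LINT x:{0..1}|lborel. (f x)\<^sup>2)"
  and L2norm_01_nonneg: "0 \<le> L2norm_01 f"
proof -
  have "0 \<le> (LINT x:{0..1}|lborel. (f x)\<^sup>2)" by (rule set_integral_nonneg) simp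
  then show "(L2norm_01 f)\<^sup>2 = (LINT x:{0..1}|lborel. (f x)\<^sup>2)" "0 \<le> L2norm_01 f"
    by (simp_all add: L2norm_01_def)
qed

lemma L2_01_measurable: "L2_01 f \<Longrightarrow> set_borel_measurable lborel {0..1} f"
  by (simp add: L2_01_def)

lemma continuous_on_imp_L2_01: "continuous_on {0..1} f \<Longrightarrow> L2_01 f"
  unfolding L2_01_def
  by (auto intro!: continuous_on_imp_set_borel_measurable borel_integrable_atLeastAtMost'
      continuous_intros)

lemma L2_01_integrable_mult:
  assumes "L2_01 f" "L2_01 g"
  shows "set_integrable lborel {0..1} (\<lambda>x. f x * g x)"
proof (rule set_integrable_bound)
  show "set_integrable lborel {0..1} (\<lambda>x. (f x)\<^sup>2 + (g x)\<^sup>2)"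
    using assms unfolding L2_01_def by (intro set_integral_add) auto
  show "set_borel_measurable lborel {0..1} (\<lambda>x. f x * g x)"
    using assms unfolding L2_01_def by (intro set_borel_measurable_mult) auto
  have "norm (f x * g x) \<le> norm ((f x)\<^sup>2 + (g x)\<^sup>2)" for x
  proof -
    have "2 * (\<bar>f x\<bar> * \<bar>g x\<bar>) \<le> (f x)\<^sup>2 + (g x)\<^sup>2"
      using sum_squares_bound[of "\<bar>f x\<bar>" "\<bar>g x\<bar>"] by simp
    moreover have "0 \<le> \<bar>f x\<bar> * \<bar>g x\<bar>" by simp
    ultimately have "\<bar>f x\<bar> * \<bar>g x\<bar> \<le> (f x)\<^sup>2 + (g x)\<^sup>2" by linarith
    then show ?thesis by (simp add: abs_mult)
  qed
  then show "AE x in lborel. x \<in> {0..1} \<longrightarrow> norm (f x * g x) \<le> norm ((f x)\<^sup>2 + (g x)\<^sup>2)"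
    by simp
qed

lemma L2_01_integrable:
  "L2_01 f \<Longrightarrow> set_integrable lborel {0..1} f"
  using L2_01_integrable_mult[of f "\<lambda>_. 1"] continuous_on_imp_L2_01[of "\<lambda>_. 1"] by simp



lemma le_sqrt_mult_sqrt_if_AM_GM_bound:
  fixes X A B :: real
  assumes "0 \<le> A" "0 \<le> B" and bound: "\<And>s. s > 0 \<Longrightarrow> 2 * X \<le> s * A + B / s"
  shows "X \<le> sqrt A * sqrt B"
proof (cases "X \<le> 0")
  case True
  moreover have "0 \<le> sqrt A * sqrt B" using assms by simp
  ultimately show ?thesis by linarith
next
  case False
  have "A > 0"
  proof (rule ccontr)
    assume "\<not> A > 0"
    with bound[of "(B + 1) / X"] False assms have "2 * X \<le> B * X / (B + 1)"
      by simp
    also have "\<dots> \<le> X"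
      using False assms by (simp add: field_simps)
    finally show False using False by simp
  qed
  with bound[of "X / A"] False have "2 * X \<le> X + B * A / X"
    by simp
  with False have "X\<^sup>2 \<le> A * B"
    by (simp add: field_simps power2_eq_square)
  then show ?thesis by (simp add: real_le_rsqrt flip: real_sqrt_mult)
qed

lemma L2_01_Cauchy_Schwarz:
  assumes "L2_01 f" "L2_01 g"
  shows "(LINT x:{0..1}|lborel. \<bar>f x * g x\<bar>) \<le> L2norm_01 f * L2norm_01 g"
  unfolding L2norm_01_def
proof (rule le_sqrt_mult_sqrt_if_AM_GM_bound)
  show "0 \<le> (LINT x:{0..1}|lborel. (f x)\<^sup>2)" "0 \<le> (LINT x:{0..1}|lborel. (g x)\<^sup>2)"
    by (auto intro: set_integral_nonneg)
  fix s :: real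
  assume s: "s > 0"
  have "2 * \<bar>f x * g x\<bar> \<le> s * (f x)\<^sup>2 + (g x)\<^sup>2 / s" for x
  proof -
    have "0 \<le> (s * \<bar>f x\<bar> - \<bar>g x\<bar>)\<^sup>2 / s" using s by simp
    then show ?thesis using s by (simp add: field_simps power2_eq_square abs_mult)
  qed
  then have "(LINT x:{0..1}|lborel. 2 * \<bar>f x * g x\<bar>)
      \<le> (LINT x:{0..1}|lborel. s * (f x)\<^sup>2 + (g x)\<^sup>2 / s)"
    using assms set_integrable_abs[OF L2_01_integrable_mult[OF assms]] unfolding L2_01_def
    by (intro set_integral_mono set_integral_add) auto
  then show "2 * (LINT x:{0..1}|lborel. \<bar>f x * g x\<bar>)
      \<le> s * (LINT x:{0..1}|lborel. (f x)\<^sup>2) + (LINT x:{0..1}|lborel. (g x)\<^sup>2) / s"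
    using assms unfolding L2_01_def by (simp add: set_integral_add)
qed

lemma L1_le_L2norm_01:
  "L2_01 f \<Longrightarrow> (LINT x:{0..1}|lborel. \<bar>f x\<bar>) \<le> L2norm_01 f"
  using L2_01_Cauchy_Schwarz[of f "\<lambda>_. 1"] continuous_on_imp_L2_01[of "\<lambda>_. 1"]
  by (simp add: L2norm_01_def set_lebesgue_integral_def)

lemma L2_01_add:
  assumes "L2_01 f" "L2_01 g"
  shows "L2_01 (\<lambda>x. f x + g x)"
proof -
  have "(f x + g x)\<^sup>2 = (f x)\<^sup>2 + 2 * (f x * g x) + (g x)\<^sup>2" for x
    by (simp add: power2_sum)
  then show ?thesis
    using assms L2_01_integrable_mult[OF assms] unfolding L2_01_def
    by (auto intro: set_borel_measurable_add)
qed

lemma L2norm_01_triangle: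
  assumes "L2_01 f" "L2_01 g"
  shows "L2norm_01 (\<lambda>x. f x + g x) \<le> L2norm_01 f + L2norm_01 g"
proof -
  have fg: "set_integrable lborel {0..1} (\<lambda>x. f x * g x)"
    using L2_01_integrable_mult[OF assms] .
  have "(L2norm_01 (\<lambda>x. f x + g x))\<^sup>2
      = (LINT x:{0..1}|lborel. (f x)\<^sup>2 + (g x)\<^sup>2 + 2 * (f x * g x))"
    by (simp add: L2norm_01_squared power2_sum mult.assoc)
  also have "\<dots> = (L2norm_01 f)\<^sup>2 + (L2norm_01 g)\<^sup>2 + 2 * (LINT x:{0..1}|lborel. f x * g x)"
    using assms fg unfolding L2_01_def by (simp add: L2norm_01_squared)
  also have "(LINT x:{0..1}|lborel. f x * g x) \<le> (LINT x:{0..1}|lborel. \<bar>f x * g x\<bar>)"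
    using fg by (intro set_integral_mono set_integrable_abs) auto
  also have "\<dots> \<le> L2norm_01 f * L2norm_01 g"
    by (rule L2_01_Cauchy_Schwarz[OF assms])
  finally have "(L2norm_01 (\<lambda>x. f x + g x))\<^sup>2 \<le> (L2norm_01 f + L2norm_01 g)\<^sup>2"
    by (simp add: power2_sum)
  then show ?thesis
    using L2norm_01_nonneg[of f] L2norm_01_nonneg[of g] by (simp add: power2_le_iff_abs_le)
qed

lemma L2_01_mono:
  assumes "L2_01 g" "set_borel_measurable lborel {0..1} f"
    and "\<And>x. x \<in> {0..1} \<Longrightarrow> \<bar>f x\<bar> \<le> \<bar>g x\<bar>"
  shows "L2_01 f" "L2norm_01 f \<le> L2norm_01 g"
proof -
  have le: "(f x)\<^sup>2 \<le> (g x)\<^sup>2" if "x \<in> {0..1}" for x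
    using assms(3)[OF that] by (simp add: abs_le_square_iff)
  have "set_integrable lborel {0..1} (\<lambda>x. (f x)\<^sup>2)"
  proof (rule set_integrable_bound)
    show "set_integrable lborel {0..1} (\<lambda>x. (g x)\<^sup>2)"
      using assms(1) by (simp add: L2_01_def)
    show "set_borel_measurable lborel {0..1} (\<lambda>x. (f x)\<^sup>2)"
      using set_borel_measurable_mult[OF assms(2) assms(2)] by (simp add: power2_eq_square)
  qed (use le in auto)
  with assms(1,2) le show "L2_01 f" "L2norm_01 f \<le> L2norm_01 g"
    unfolding L2_01_def L2norm_01_def by (auto intro!: set_integral_mono)
qed

lemma L2_01_cmult:
  "L2_01 f \<Longrightarrow> L2_01 (\<lambda>x. c * f x)"
  unfolding L2_01_def by (simp add: power_mult_distrib set_borel_measurable_cmult)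

lemma L2norm_01_cmult: "L2norm_01 (\<lambda>x. c * f x) = \<bar>c\<bar> * L2norm_01 f"
  by (simp add: L2norm_01_def power_mult_distrib real_sqrt_mult)

lemma L2_01_abs: "L2_01 f \<Longrightarrow> L2_01 (\<lambda>x. \<bar>f x\<bar>)"
  unfolding L2_01_def by (simp add: set_borel_measurable_abs)

lemma L2norm_01_abs: "L2norm_01 (\<lambda>x. \<bar>f x\<bar>) = L2norm_01 f"
  by (simp add: L2norm_01_def)

lemma L2_01_pointwise_bound:
  assumes "L2_01 f" "L2_01 g" "set_borel_measurable lborel {0..1} w" "0 \<le> a" "0 \<le> b"
    and bound: "\<And>x. x \<in> {0..1} \<Longrightarrow> \<bar>w x\<bar> \<le> a * \<bar>f x\<bar> + b * \<bar>g x\<bar>"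
  shows "L2_01 w" "L2norm_01 w \<le> a * L2norm_01 f + b * L2norm_01 g"
proof -
  have L2: "L2_01 (\<lambda>x. a * \<bar>f x\<bar>)" "L2_01 (\<lambda>x. b * \<bar>g x\<bar>)"
    using assms by (simp_all add: L2_01_cmult L2_01_abs)
  have "\<bar>w x\<bar> \<le> \<bar>a * \<bar>f x\<bar> + b * \<bar>g x\<bar>\<bar>" if "x \<in> {0..1}" for x
    using bound[OF that] by simp
  note dominated = L2_01_mono[OF L2_01_add[OF L2] assms(3) this]
  show "L2_01 w" by (rule dominated(1))
  have "L2norm_01 w \<le> L2norm_01 (\<lambda>x. a * \<bar>f x\<bar>) + L2norm_01 (\<lambda>x. b * \<bar>g x\<bar>)"
    using dominated(2) L2norm_01_triangle[OF L2] by linarith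
  then show "L2norm_01 w \<le> a * L2norm_01 f + b * L2norm_01 g"
    using assms(4,5) by (simp add: L2norm_01_cmult L2norm_01_abs)
qed

section \<open>Primitives and weak derivatives\<close>

lemma continuous_on_primitive:
  fixes g :: "real \<Rightarrow> real"
  assumes g: "set_integrable lborel {0..1} g"
  shows "continuous_on {0..1} (\<lambda>x. LINT s:{0..x}|lborel. g s)"
proof -
  have "continuous_on {0..1} (\<lambda>x. integral {0..x} g)"
    by (rule indefinite_integral_continuous_1) (rule set_borel_integral_eq_integral(1)[OF g])
  moreover have "integral {0..x} g = (LINT s:{0..x}|lborel. g s)" if "x \<in> {0..1}" for x
    using that
    by (intro set_borel_integral_eq_integral(2)[symmetric] set_integrable_subset[OF g]) auto
  ultimately show ?thesis by (rule continuous_on_eq)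
qed

lemma abs_primitive_le_L2norm_01:
  fixes g :: "real \<Rightarrow> real"
  assumes g: "L2_01 g" and x: "x \<in> {0..1}"
  shows "\<bar>LINT s:{0..x}|lborel. g s\<bar> \<le> L2norm_01 g"
proof -
  have gi: "set_integrable lborel {0..1} g" using L2_01_integrable[OF g] .
  have "\<bar>LINT s:{0..x}|lborel. g s\<bar> \<le> (\<integral>s. indicator {0..1} s * \<bar>g s\<bar> \<partial>lborel)"
    unfolding set_lebesgue_integral_def
  proof (rule integral_abs_bound_integral)
    show "integrable lborel (\<lambda>s. indicator {0..x} s *\<^sub>R g s)"
      using set_integrable_subset[OF gi, of "{0..x}"] x unfolding set_integrable_def by auto
    show "integrable lborel (\<lambda>s. indicator {0..1} s * \<bar>g s\<bar>)"
      using set_integrable_abs[OF gi] unfolding set_integrable_def by simp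
    show "\<bar>indicator {0..x} s *\<^sub>R g s\<bar> \<le> indicator {0..1} s * \<bar>g s\<bar>" for s
      using x by (auto simp: indicator_def)
  qed
  also have "\<dots> = (LINT s:{0..1}|lborel. \<bar>g s\<bar>)"
    by (simp add: set_lebesgue_integral_def)
  also have "\<dots> \<le> L2norm_01 g"
    by (rule L1_le_L2norm_01[OF g])
  finally show ?thesis .
qed

lemma integrable_pair_mult_bounded:
  fixes g :: "real \<Rightarrow> real" and k :: "real \<Rightarrow> real \<Rightarrow> real"
  assumes g: "integrable lborel g"
    and k: "(\<lambda>(s, x). k s x) \<in> borel_measurable (lborel \<Otimes>\<^sub>M lborel)"
    and bound: "\<And>s x. \<bar>k s x\<bar> \<le> C * indicator {a..b} x"
  shows "integrable (lborel \<Otimes>\<^sub>M lborel) (\<lambda>(s, x). g s * k s x)"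
proof (rule Bochner_Integration.integrable_bound)
  have [measurable]: "g \<in> borel_measurable lborel" using g by auto
  show "integrable (lborel \<Otimes>\<^sub>M lborel) (\<lambda>(s, x). \<bar>g s\<bar> * (C * indicator {a..b} x))"
  proof (rule lborel_pair.Fubini_integrable)
    have "(\<integral>x. norm (\<bar>g s\<bar> * (C * indicator {a..b} x)) \<partial>lborel) = \<bar>g s\<bar> * \<bar>C\<bar> * (b - a)"
      if "a \<le> b" for s
      using that by (simp add: abs_mult)
    then show "integrable lborel
        (\<lambda>s. \<integral>x. norm (case (s, x) of (s, x) \<Rightarrow> \<bar>g s\<bar> * (C * indicator {a..b} x)) \<partial>lborel)"
      using g by (cases "a \<le> b") simp_all
    have "integrable lborel (indicat_real {a..b})"
      using borel_integrable_atLeastAtMost'[of a b "\<lambda>_. 1::real"]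
      by (simp add: set_integrable_def)
    then have "integrable lborel (\<lambda>x. \<bar>g s\<bar> * (C * indicat_real {a..b} x))" for s
      by (intro integrable_mult_right)
    then show "AE s in lborel. integrable lborel
        (\<lambda>x. case (s, x) of (s, x) \<Rightarrow> \<bar>g s\<bar> * (C * indicator {a..b} x))"
      by simp
  qed simp
  show "(\<lambda>(s, x). g s * k s x) \<in> borel_measurable (lborel \<Otimes>\<^sub>M lborel)"
    using k by measurable
  show "AE p in lborel \<Otimes>\<^sub>M lborel.
      norm (case p of (s, x) \<Rightarrow> g s * k s x) \<le> norm (case p of (s, x) \<Rightarrow> \<bar>g s\<bar> * (C * indicator {a..b} x))"
  proof (rule AE_I2, clarify)
    fix s x
    have "\<bar>g s\<bar> * \<bar>k s x\<bar> \<le> \<bar>g s\<bar> * (C * indicator {a..b} x)"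
      by (intro mult_left_mono bound) simp
    moreover have "0 \<le> C * indicat_real {a..b} x"
      using order_trans[OF abs_ge_zero bound] .
    then have "norm (\<bar>g s\<bar> * (C * indicator {a..b} x)) = \<bar>g s\<bar> * (C * indicator {a..b} x)"
      by simp
    ultimately show "norm (g s * k s x) \<le> norm (\<bar>g s\<bar> * (C * indicator {a..b} x))"
      by (simp only: real_norm_def abs_mult)
  qed
qed

text \<open>Fubini over the triangle \<open>0 \<le> s \<le> x \<le> 1\<close>; \<open>g\<close> need only be integrable.\<close>

lemma integral_primitive_mult_deriv:
  fixes g \<psi> \<psi>' :: "real \<Rightarrow> real"
  assumes g: "set_integrable lborel {0..1} g"
    and \<psi>: "\<And>x. DERIV \<psi> x :> \<psi>' x" and \<psi>'_cont: "\<And>x. isCont \<psi>' x"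
  shows "(LINT x:{0..1}|lborel. (LINT s:{0..x}|lborel. g s) * \<psi>' x)
       = (LINT s:{0..1}|lborel. g s * (\<psi> 1 - \<psi> s))"
proof -
  define g' where "g' s = indicator {0..1} s * g s" for s
  define k where "k s x = (if 0 \<le> s \<and> s \<le> x \<and> x \<le> 1 then \<psi>' x else 0)" for s x
  have [measurable]: "\<psi>' \<in> borel_measurable lborel"
    using borel_measurable_continuous_onI[of \<psi>'] \<psi>'_cont continuous_at_imp_continuous_on by auto
  obtain C where C: "\<And>x. x \<in> {0..1} \<Longrightarrow> \<bar>\<psi>' x\<bar> \<le> C"
    using compact_imp_bounded[OF compact_continuous_image[of "{0..1}" \<psi>']] \<psi>'_cont
    by (force simp: bounded_iff continuous_at_imp_continuous_on)
  then have "0 \<le> C" using order_trans[OF abs_ge_zero C[of 0]] by simp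
  have "integrable (lborel \<Otimes>\<^sub>M lborel) (\<lambda>(s, x). g' s * k s x)"
  proof (rule integrable_pair_mult_bounded)
    show "integrable lborel g'"
      using g unfolding set_integrable_def g'_def by simp
    show "(\<lambda>(s, x). k s x) \<in> borel_measurable (lborel \<Otimes>\<^sub>M lborel)"
      unfolding k_def by measurable
    show "\<bar>k s x\<bar> \<le> C * indicator {0..1} x" for s x
      using C[of x] \<open>0 \<le> C\<close> by (auto simp: k_def)
  qed
  then have "(\<integral>x. (\<integral>s. g' s * k s x \<partial>lborel) \<partial>lborel) = (\<integral>s. (\<integral>x. g' s * k s x \<partial>lborel) \<partial>lborel)"
    by (rule lborel_pair.Fubini_integral)
  moreover have "(\<integral>s. g' s * k s x \<partial>lborel)
      = indicator {0..1} x * ((LINT s:{0..x}|lborel. g s) * \<psi>' x)" for x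
  proof -
    have "g' s * k s x = indicator {0..1} x * ((indicator {0..x} s * g s) * \<psi>' x)" for s
      by (auto simp: g'_def k_def indicator_def)
    then show ?thesis by (simp add: set_lebesgue_integral_def)
  qed
  moreover have "(\<integral>x. g' s * k s x \<partial>lborel) = indicator {0..1} s * (g s * (\<psi> 1 - \<psi> s))" for s
  proof (cases "s \<in> {0..1}")
    case True
    have "g' s * k s x = g s * (\<psi>' x * indicator {s..1} x)" for x
      using True by (auto simp: g'_def k_def indicator_def)
    moreover have "(\<integral>x. \<psi>' x * indicator {s..1} x \<partial>lborel) = \<psi> 1 - \<psi> s"
      using True by (intro integral_FTC_Icc_real \<psi> \<psi>'_cont) auto
    ultimately show ?thesis using True by simp
  qed (simp add: g'_def)
  ultimately show ?thesis by (simp add: set_lebesgue_integral_def)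
qed

lemma integral_primitive_mult_deriv_vanishing_at_1:
  fixes g \<psi> \<psi>' :: "real \<Rightarrow> real"
  assumes "set_integrable lborel {0..1} g"
    and "\<And>x. DERIV \<psi> x :> \<psi>' x" "\<And>x. isCont \<psi>' x" "\<psi> 1 = 0"
  shows "(LINT x:{0..1}|lborel. (LINT s:{0..x}|lborel. g s) * \<psi>' x)
       = - (LINT x:{0..1}|lborel. g x * \<psi> x)"
  using integral_primitive_mult_deriv[OF assms(1-3)] assms(4)
    set_integral_mult_right[where a="-1::real"]
  by simp

lemma test_fun_01_smooth: "test_fun_01 \<phi> \<Longrightarrow> smooth \<phi>"
  by (simp add: test_fun_01_iff)

lemma test_fun_01_vanishes_at_boundary:
  assumes "test_fun_01 \<phi>"
  shows "\<phi> 0 = 0" "\<phi> 1 = 0" "deriv \<phi> 0 = 0" "deriv \<phi> 1 = 0"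
proof -
  obtain a b where ab: "0 < a" "b < 1" "\<And>x. x \<notin> {a..b} \<Longrightarrow> \<phi> x = 0"
    using assms unfolding test_fun_01_def by blast
  have deriv_0: "deriv \<phi> t = 0" if "open S" "t \<in> S" "\<And>x. x \<in> S \<Longrightarrow> \<phi> x = 0" for S t
  proof -
    have "DERIV (\<lambda>x. 0) t :> 0" by simp
    then have "DERIV \<phi> t :> 0"
      by (rule has_field_derivative_transform_within_open[OF _ that(1,2)]) (use that(3) in auto)
    then show ?thesis by (rule DERIV_imp_deriv)
  qed
  show "\<phi> 0 = 0" "\<phi> 1 = 0" using ab by auto
  show "deriv \<phi> 0 = 0" by (rule deriv_0[of "{..<a}"]) (use ab in auto)
  show "deriv \<phi> 1 = 0" by (rule deriv_0[of "{b<..}"]) (use ab in auto)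
qed

text \<open>\<open>u\<close> minus the primitive of \<open>du\<close> has weak derivative zero, so it is constant by the
  du Bois-Reymond lemma.\<close>

lemma weak_deriv_01_imp_primitive:
  fixes u du :: "real \<Rightarrow> real"
  assumes u: "continuous_on {0..1} u" and du: "L2_01 du" and weak: "weak_deriv_01 u du"
    and u0: "u 0 = 0" and x: "x \<in> {0..1}"
  shows "u x = (LINT s:{0..x}|lborel. du s)"
proof -
  define G where "G x = (LINT s:{0..x}|lborel. du s)" for x
  have G: "continuous_on {0..1} G"
    unfolding G_def by (rule continuous_on_primitive[OF L2_01_integrable[OF du]])
  have "G 0 = integral {0..0} du"
    unfolding G_def
    by (intro set_borel_integral_eq_integral(2) set_integrable_subset[OF L2_01_integrable[OF du]])
       auto
  then have G0: "G 0 = 0" by simp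
  have "(LINT t:{0..1}|lborel. (u t - G t) * deriv \<phi> t) = 0" if \<phi>: "test_fun_01 \<phi>" for \<phi>
  proof -
    have \<phi>': "DERIV \<phi> x :> deriv \<phi> x" "isCont (deriv \<phi>) x" for x
      using smooth_DERIV smooth_isCont smooth_deriv test_fun_01_smooth[OF \<phi>] by blast+
    then have \<phi>'_cont: "continuous_on {0..1} (deriv \<phi>)"
      by (intro continuous_at_imp_continuous_on) auto
    have "(LINT t:{0..1}|lborel. G t * deriv \<phi> t) = - (LINT t:{0..1}|lborel. du t * \<phi> t)"
      unfolding G_def using test_fun_01_vanishes_at_boundary(2)[OF \<phi>]
      by (rule integral_primitive_mult_deriv_vanishing_at_1[OF L2_01_integrable[OF du] \<phi>'])
    also have "\<dots> = (LINT t:{0..1}|lborel. u t * deriv \<phi> t)"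
      using weak \<phi> unfolding weak_deriv_01_def by simp
    finally show ?thesis
      using u G \<phi>'_cont
      by (simp add: left_diff_distrib borel_integrable_atLeastAtMost' continuous_on_mult)
  qed
  then have "u x - G x = u 0 - G 0"
    by (intro du_Bois_Reymond_01[OF continuous_on_diff[OF u G]] x)
  then show ?thesis using u0 G0 by (simp add: G_def)
qed

lemma abs_le_L2norm_01_weak_deriv:
  assumes "continuous_on {0..1} u" "L2_01 du" "weak_deriv_01 u du" "u 0 = 0" "x \<in> {0..1}"
  shows "\<bar>u x\<bar> \<le> L2norm_01 du"
  using weak_deriv_01_imp_primitive[OF assms] abs_primitive_le_L2norm_01[OF assms(2,5)] by simp

lemma weak_deriv_01_C1_vanishing_at_1:
  fixes u du \<psi> \<psi>' :: "real \<Rightarrow> real"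
  assumes u: "continuous_on {0..1} u" and du: "L2_01 du" and weak: "weak_deriv_01 u du"
    and u0: "u 0 = 0"
    and \<psi>: "\<And>x. DERIV \<psi> x :> \<psi>' x" "\<And>x. isCont \<psi>' x" "\<psi> 1 = 0"
  shows "(LINT x:{0..1}|lborel. u x * \<psi>' x) = - (LINT x:{0..1}|lborel. du x * \<psi> x)"
proof -
  have "(LINT x:{0..1}|lborel. u x * \<psi>' x)
      = (LINT x:{0..1}|lborel. (LINT s:{0..x}|lborel. du s) * \<psi>' x)"
    using weak_deriv_01_imp_primitive[OF u du weak u0] by (auto intro: set_lebesgue_integral_cong)
  also have "\<dots> = - (LINT x:{0..1}|lborel. du x * \<psi> x)"
    by (rule integral_primitive_mult_deriv_vanishing_at_1[OF L2_01_integrable[OF du] \<psi>])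
  finally show ?thesis .
qed

lemma integral_mult_deriv2_test_fun_01:
  fixes v v' \<phi> :: "real \<Rightarrow> real"
  assumes v: "\<And>x. DERIV v x :> v' x" "\<And>x. isCont v' x" and \<phi>: "test_fun_01 \<phi>"
  shows "(LINT x:{0..1}|lborel. v x * deriv (deriv \<phi>) x) = - (LINT x:{0..1}|lborel. v' x * deriv \<phi> x)"
proof -
  have \<phi>': "smooth (deriv \<phi>)"
    using test_fun_01_smooth[OF \<phi>] by (rule smooth_deriv)
  have "(\<integral>x. indicator {0..1} x *\<^sub>R (v x * deriv (deriv \<phi>) x) \<partial>lborel)
      = v 1 * deriv \<phi> 1 - v 0 * deriv \<phi> 0 - (\<integral>x. indicator {0..1} x *\<^sub>R (v' x * deriv \<phi> x) \<partial>lborel)"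
    by (rule integral_by_parts')
       (auto intro: v smooth_DERIV smooth_isCont \<phi>' smooth_deriv)
  then show ?thesis
    using test_fun_01_vanishes_at_boundary(3,4)[OF \<phi>] by (simp add: set_lebesgue_integral_def)
qed

text \<open>With \<open>\<psi> = v \<phi>\<close> we have \<open>a v \<phi>' = a \<psi>' - a\<^sup>2 v \<phi>\<close>.\<close>

lemma integral_mult_deriv2_linear_ODE:
  fixes a v \<phi> :: "real \<Rightarrow> real"
  assumes a: "\<And>x. isCont a x" and v: "\<And>x. DERIV v x :> a x * v x" and \<phi>: "test_fun_01 \<phi>"
  shows "(LINT x:{0..1}|lborel. v x * deriv (deriv \<phi>) x)
    = (LINT x:{0..1}|lborel. (a x)\<^sup>2 * v x * \<phi> x)
      - (LINT x:{0..1}|lborel. a x * (a x * v x * \<phi> x + v x * deriv \<phi> x))"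
proof -
  have v_cont: "isCont v x" for x
    using v by (rule DERIV_isCont)
  have \<phi>_smooth: "isCont \<phi> x" "isCont (deriv \<phi>) x" for x
    using test_fun_01_smooth[OF \<phi>] by (auto intro: smooth_isCont smooth_deriv)
  have int_cont: "set_integrable lborel {0..1} f" if "\<And>x. isCont f x" for f :: "real \<Rightarrow> real"
    using that by (intro borel_integrable_atLeastAtMost' continuous_at_imp_continuous_on) auto
  have "(LINT x:{0..1}|lborel. v x * deriv (deriv \<phi>) x)
      = - (LINT x:{0..1}|lborel. (a x * v x) * deriv \<phi> x)"
    using a v_cont by (intro integral_mult_deriv2_test_fun_01[OF v _ \<phi>] continuous_intros)
  also have "\<dots> = - (LINT x:{0..1}|lborel. a x * (a x * v x * \<phi> x + v x * deriv \<phi> x)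
                                          - (a x)\<^sup>2 * v x * \<phi> x)"
    by (simp add: power2_eq_square algebra_simps)
  also have "\<dots> = (LINT x:{0..1}|lborel. (a x)\<^sup>2 * v x * \<phi> x)
      - (LINT x:{0..1}|lborel. a x * (a x * v x * \<phi> x + v x * deriv \<phi> x))"
    using a v_cont \<phi>_smooth by (subst set_integral_diff(2)) (auto intro!: int_cont continuous_intros)
  finally show ?thesis .
qed

section \<open>The Cole-Hopf transform\<close>

lemma continuous_on_ColeHopf:
  assumes "set_integrable lborel {0..1} u"
  shows "continuous_on {0..1} (ColeHopf u)"
  unfolding ColeHopf_def[abs_def] divide_inverse
  by (intro continuous_intros continuous_on_primitive[OF assms])

lemma ColeHopf_pos_le_exp_L2norm_01:
  assumes u: "L2_01 u" and x: "x \<in> {0..1}"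
  shows "0 < ColeHopf u x" "ColeHopf u x \<le> exp (L2norm_01 u)"
proof -
  define N where "N = L2norm_01 u"
  define U where "U y = (LINT s:{0..y}|lborel. u s)" for y
  define Z where "Z = (LINT y:{0..1}|lborel. exp (- (1/2) * U y))"
  have U: "\<bar>U y\<bar> \<le> N" if "y \<in> {0..1}" for y
    unfolding U_def N_def by (rule abs_primitive_le_L2norm_01[OF u that])
  have "(LINT y::real:{0..1}|lborel. exp (- N / 2)) \<le> Z"
    unfolding Z_def
  proof (rule set_integral_mono)
    show "set_integrable lborel {0..1} (\<lambda>y. exp (- (1/2) * U y))"
      unfolding U_def
      by (intro borel_integrable_atLeastAtMost' continuous_intros
          continuous_on_primitive[OF L2_01_integrable[OF u]])
    show "exp (- N / 2) \<le> exp (- (1/2) * U y)" if "y \<in> {0..1}" for y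
      using U[OF that] by simp
  qed (simp add: borel_integrable_atLeastAtMost')
  then have Z: "exp (- N / 2) \<le> Z"
    by (simp add: set_lebesgue_integral_def)
  have "exp (- (1/2) * U x) \<le> exp (N / 2)"
    using U[OF x] by simp
  then have "ColeHopf u x \<le> exp (N / 2) / exp (- N / 2)"
    unfolding ColeHopf_def U_def[symmetric] Z_def[symmetric]
    using Z by (intro frac_le) auto
  also have "\<dots> = exp N"
    by (simp flip: exp_diff)
  finally show "ColeHopf u x \<le> exp (L2norm_01 u)" by (simp add: N_def)
  show "0 < ColeHopf u x"
    unfolding ColeHopf_def U_def[symmetric] Z_def[symmetric]
    using Z by (simp add: less_le_trans[OF exp_gt_zero])
qed

text \<open>\<open>u\<close> is extended to \<open>\<real>\<close> by the constants \<open>u 0 = 0\<close> and \<open>u 1\<close>; as the extension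
  vanishes on \<open>(-\<infinity>, 0]\<close>, its primitive from \<open>-1\<close> agrees with \<open>\<integral>\<^sub>0\<^sup>x u\<close> on \<open>[0, 1]\<close>.\<close>

lemma ColeHopf_C1_extension:
  fixes u :: "real \<Rightarrow> real"
  assumes u: "continuous_on {0..1} u" and u0: "u 0 = 0"
  obtains u' v where "\<And>x. isCont u' x" "\<And>x. x \<in> {0..1} \<Longrightarrow> u' x = u x"
    "\<And>x. DERIV v x :> - (1/2) * u' x * v x" "\<And>x. x \<in> {0..1} \<Longrightarrow> v x = ColeHopf u x"
proof
  define u' where "u' x = u (max 0 (min 1 x))" for x
  define U where "U t = integral {-1..t} u'" for t
  define Z where "Z = (LINT y:{0..1}|lborel. exp (- (1/2) * (LINT s:{0..y}|lborel. u s)))"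
  have "continuous_on UNIV u'"
    unfolding u'_def by (rule continuous_on_compose2[OF u]) (auto intro!: continuous_intros)
  then show u'_cont: "isCont u' x" for x
    by (simp add: continuous_on_eq_continuous_at)
  show u'_eq: "u' x = u x" if "x \<in> {0..1}" for x
    using that by (simp add: u'_def)
  have u'_0: "u' x = 0" if "x \<le> 0" for x
    using that u0 by (simp add: u'_def)
  have U': "DERIV U t :> u' t" for t
    unfolding U_def by (rule DERIV_integral_vanishing_below[where c=0]) (use u'_cont u'_0 in auto)
  show "DERIV (\<lambda>t. exp (- (1/2) * U t) / Z) x :> - (1/2) * u' x * (exp (- (1/2) * U x) / Z)"
    for x
  proof -
    have "DERIV (\<lambda>t. exp (- (1/2) * U t)) x :> exp (- (1/2) * U x) * (- (1/2) * u' x)"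
      by (auto intro!: derivative_eq_intros U')
    from DERIV_cdivide[OF this, where c=Z] show ?thesis by (simp add: field_simps)
  qed
  show "exp (- (1/2) * U x) / Z = ColeHopf u x" if x: "x \<in> {0..1}" for x
  proof -
    have "integral {-1..0} u' = 0"
      by (rule integral_eq_0_below[where c=0]) (use u'_0 in auto)
    moreover have "integral {-1..0} u' + integral {0..x} u' = U x"
      unfolding U_def using x
      by (intro Henstock_Kurzweil_Integration.integral_combine integrable_continuous_interval
          continuous_at_imp_continuous_on ballI u'_cont) auto
    moreover have "integral {0..x} u' = integral {0..x} u"
      by (rule integral_cong) (use x u'_eq in auto)
    moreover have "integral {0..x} u = (LINT s:{0..x}|lborel. u s)"
      using x
      by (intro set_borel_integral_eq_integral(2)[symmetric] borel_integrable_atLeastAtMost'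
          continuous_on_subset[OF u]) auto
    ultimately show ?thesis by (simp add: ColeHopf_def Z_def)
  qed
qed

lemma integral_ColeHopf_mult_deriv2:
  fixes u du :: "real \<Rightarrow> real"
  assumes u: "continuous_on {0..1} u" and du: "L2_01 du" and weak: "weak_deriv_01 u du"
    and u0: "u 0 = 0" and \<phi>: "test_fun_01 \<phi>"
  shows "(LINT x:{0..1}|lborel. ColeHopf u x * deriv (deriv \<phi>) x)
    = (1/4) * (LINT x:{0..1}|lborel. (u x)\<^sup>2 * (ColeHopf u x * \<phi> x))
      - (1/2) * (LINT x:{0..1}|lborel. du x * (ColeHopf u x * \<phi> x))"
proof -
  obtain u' v where u': "\<And>x. isCont u' x" "\<And>x. x \<in> {0..1} \<Longrightarrow> u' x = u x"
    and v: "\<And>x. DERIV v x :> - (1/2) * u' x * v x"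
    and v_eq: "\<And>x. x \<in> {0..1} \<Longrightarrow> v x = ColeHopf u x"
    using ColeHopf_C1_extension[OF u u0] by metis
  have a_cont: "isCont (\<lambda>x. - (1/2) * u' x) x" for x
    using u'(1) by (intro continuous_intros)
  have v_cont: "isCont v x" for x
    using v by (rule DERIV_isCont)
  have \<phi>_smooth: "DERIV \<phi> x :> deriv \<phi> x" "isCont \<phi> x" "isCont (deriv \<phi>) x" for x
    using test_fun_01_smooth[OF \<phi>] by (auto intro: smooth_DERIV smooth_isCont smooth_deriv)
  define \<psi>' where "\<psi>' x = - (1/2) * u' x * v x * \<phi> x + v x * deriv \<phi> x" for x
  have \<psi>: "DERIV (\<lambda>x. v x * \<phi> x) x :> \<psi>' x" "isCont \<psi>' x" for x
    unfolding \<psi>'_def using \<phi>_smooth u'(1) v_cont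
    by (auto intro!: derivative_eq_intros v continuous_intros)
  have "(LINT x:{0..1}|lborel. - (1/2) * u' x * \<psi>' x)
      = (LINT x:{0..1}|lborel. (- (1/2)) * (u x * \<psi>' x))"
    by (rule set_lebesgue_integral_cong) (auto simp: u'(2))
  also have "\<dots> = - (1/2) * (LINT x:{0..1}|lborel. u x * \<psi>' x)"
    by (rule set_integral_mult_right)
  also have "\<dots> = (1/2) * (LINT x:{0..1}|lborel. du x * (v x * \<phi> x))"
    using test_fun_01_vanishes_at_boundary(2)[OF \<phi>]
    by (subst weak_deriv_01_C1_vanishing_at_1[OF u du weak u0 \<psi>]) simp_all
  also have "(LINT x:{0..1}|lborel. du x * (v x * \<phi> x))
      = (LINT x:{0..1}|lborel. du x * (ColeHopf u x * \<phi> x))"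
    by (rule set_lebesgue_integral_cong) (auto simp: v_eq)
  finally have first_order: "(LINT x:{0..1}|lborel. - (1/2) * u' x * \<psi>' x)
      = (1/2) * (LINT x:{0..1}|lborel. du x * (ColeHopf u x * \<phi> x))" .
  have "(LINT x:{0..1}|lborel. (- (1/2) * u' x)\<^sup>2 * v x * \<phi> x)
      = (LINT x:{0..1}|lborel. (1/4) * ((u x)\<^sup>2 * (ColeHopf u x * \<phi> x)))"
    by (rule set_lebesgue_integral_cong) (auto simp: u'(2) v_eq power2_eq_square)
  then have second_order: "(LINT x:{0..1}|lborel. (- (1/2) * u' x)\<^sup>2 * v x * \<phi> x)
      = (1/4) * (LINT x:{0..1}|lborel. (u x)\<^sup>2 * (ColeHopf u x * \<phi> x))"
    by (simp only: set_integral_mult_right)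
  have "(LINT x:{0..1}|lborel. ColeHopf u x * deriv (deriv \<phi>) x)
      = (LINT x:{0..1}|lborel. v x * deriv (deriv \<phi>) x)"
    by (rule set_lebesgue_integral_cong) (auto simp: v_eq)
  then show ?thesis
    unfolding integral_mult_deriv2_linear_ODE[OF _ v \<phi>, OF a_cont] \<psi>'_def[symmetric]
      first_order second_order .
qed

lemma weak_deriv2_01_ColeHopf:
  fixes u du :: "real \<Rightarrow> real"
  assumes u: "continuous_on {0..1} u" and du: "L2_01 du" and weak: "weak_deriv_01 u du"
    and u0: "u 0 = 0"
  shows "weak_deriv2_01 (ColeHopf u) (\<lambda>x. ColeHopf u x * ((u x)\<^sup>2 / 4 - du x / 2))"
  unfolding weak_deriv2_01_def
proof (intro allI impI)
  fix \<phi> assume \<phi>: "test_fun_01 \<phi>"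
  have v\<phi>: "continuous_on {0..1} (\<lambda>x. ColeHopf u x * \<phi> x)"
    using smooth_isCont[OF test_fun_01_smooth[OF \<phi>]]
    by (intro continuous_on_mult continuous_on_ColeHopf borel_integrable_atLeastAtMost' u
        continuous_at_imp_continuous_on ballI)
  have "set_integrable lborel {0..1} (\<lambda>x. (u x)\<^sup>2 * (ColeHopf u x * \<phi> x))"
    by (intro borel_integrable_atLeastAtMost' continuous_on_mult continuous_on_power u v\<phi>)
  moreover have "set_integrable lborel {0..1} (\<lambda>x. du x * (ColeHopf u x * \<phi> x))"
    by (intro L2_01_integrable_mult[OF du] continuous_on_imp_L2_01 v\<phi>)
  ultimately have "(1/4) * (LINT x:{0..1}|lborel. (u x)\<^sup>2 * (ColeHopf u x * \<phi> x))
      - (1/2) * (LINT x:{0..1}|lborel. du x * (ColeHopf u x * \<phi> x))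
    = (LINT x:{0..1}|lborel. (1/4) * ((u x)\<^sup>2 * (ColeHopf u x * \<phi> x))
                             - (1/2) * (du x * (ColeHopf u x * \<phi> x)))"
    by (simp only: set_integral_diff(2) set_integrable_mult_right set_integral_mult_right)
  also have "\<dots> = (LINT x:{0..1}|lborel. ColeHopf u x * ((u x)\<^sup>2 / 4 - du x / 2) * \<phi> x)"
    by (rule set_lebesgue_integral_cong) (auto simp: algebra_simps)
  finally show "(LINT x:{0..1}|lborel. ColeHopf u x * deriv (deriv \<phi>) x)
      = (LINT x:{0..1}|lborel. ColeHopf u x * ((u x)\<^sup>2 / 4 - du x / 2) * \<phi> x)"
    unfolding integral_ColeHopf_mult_deriv2[OF u du weak u0 \<phi>] .
qed

lemma abs_ColeHopf_deriv2_le: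
  fixes u du :: "real \<Rightarrow> real"
  assumes "L2_01 u" "continuous_on {0..1} u" "L2_01 du" "weak_deriv_01 u du" "u 0 = 0"
    and x: "x \<in> {0..1}"
  shows "\<bar>ColeHopf u x * ((u x)\<^sup>2 / 4 - du x / 2)\<bar>
    \<le> (exp (L2norm_01 u) * L2norm_01 du / 4) * \<bar>u x\<bar> + (exp (L2norm_01 u) / 2) * \<bar>du x\<bar>"
proof -
  have "\<bar>(u x)\<^sup>2 / 4 - du x / 2\<bar> \<le> \<bar>u x\<bar> * \<bar>u x\<bar> / 4 + \<bar>du x\<bar> / 2"
    using abs_triangle_ineq4[of "(u x)\<^sup>2 / 4" "du x / 2"] by (simp add: power2_eq_square abs_mult)
  also have "\<bar>u x\<bar> * \<bar>u x\<bar> \<le> L2norm_01 du * \<bar>u x\<bar>"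
    using mult_right_mono[OF abs_le_L2norm_01_weak_deriv[OF assms(2-6)] abs_ge_zero[of "u x"]] .
  finally have "\<bar>(u x)\<^sup>2 / 4 - du x / 2\<bar> \<le> (L2norm_01 du / 4) * \<bar>u x\<bar> + (1/2) * \<bar>du x\<bar>"
    by simp
  moreover note ColeHopf_pos_le_exp_L2norm_01[OF assms(1) x]
  ultimately have "\<bar>ColeHopf u x\<bar> * \<bar>(u x)\<^sup>2 / 4 - du x / 2\<bar>
      \<le> exp (L2norm_01 u) * ((L2norm_01 du / 4) * \<bar>u x\<bar> + (1/2) * \<bar>du x\<bar>)"
    by (intro mult_mono) auto
  moreover have "exp (L2norm_01 u) * ((L2norm_01 du / 4) * \<bar>u x\<bar> + (1/2) * \<bar>du x\<bar>)
      = (exp (L2norm_01 u) * L2norm_01 du / 4) * \<bar>u x\<bar> + (exp (L2norm_01 u) / 2) * \<bar>du x\<bar>"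
    by (simp add: algebra_simps)
  ultimately show ?thesis by (simp only: abs_mult)
qed

theorem mainTheorem6:
  fixes u0 du0 :: "real \<Rightarrow> real"
  assumes "L2_01 u0"
    and "continuous_on {0..1} u0"
    and "L2_01 du0"
    and "weak_deriv_01 u0 du0"
    and "u0 0 = 0" and "u0 1 = 0"
  shows "\<exists>w. L2_01 w \<and> weak_deriv2_01 (ColeHopf u0) w
           \<and> L2norm_01 w \<le> (1/2) * exp (L2norm_01 u0) * L2norm_01 du0 * (1 + L2norm_01 u0 / 2)"
proof -
  define w where "w x = ColeHopf u0 x * ((u0 x)\<^sup>2 / 4 - du0 x / 2)" for x
  have "set_borel_measurable lborel {0..1}
      (\<lambda>x. ColeHopf u0 x * ((1/4) * (u0 x * u0 x) + (- 1/2) * du0 x))"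
    using L2_01_measurable[OF assms(1)] L2_01_measurable[OF assms(3)]
      continuous_on_imp_set_borel_measurable[OF continuous_on_ColeHopf[OF L2_01_integrable[OF assms(1)]]]
    by (intro set_borel_measurable_mult set_borel_measurable_add set_borel_measurable_cmult)
  then have w_measurable: "set_borel_measurable lborel {0..1} w"
    by (simp add: w_def[abs_def] power2_eq_square)
  have "0 \<le> exp (L2norm_01 u0) * L2norm_01 du0 / 4" "0 \<le> exp (L2norm_01 u0) / 2"
    using L2norm_01_nonneg[of du0] by simp_all
  note L2_w = L2_01_pointwise_bound[OF assms(1,3) w_measurable this
      abs_ColeHopf_deriv2_le[OF assms(1-5), folded w_def]]
  have "L2norm_01 w \<le> (1/2) * exp (L2norm_01 u0) * L2norm_01 du0 * (1 + L2norm_01 u0 / 2)"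
    using L2_w(2) by (simp add: algebra_simps)
  with L2_w(1) weak_deriv2_01_ColeHopf[OF assms(2-5)] show ?thesis
    unfolding w_def[abs_def] by blast
qed

end
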